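(* Let $G$ be a finite group and $\Gamma$ a finite digraph with at least one arc such that $G\leq\mathrm{Aut}(\Gamma)$ acts primitively on the vertex set and transitively on the set of $s$-arcs of $\Gamma$ for some $s\geq 2$. Let $v$ be a vertex of $\Gamma$ and $G_v$ its stabiliser. Then for every prime $p$ dividing $|G_v|$, the group $G_v$ has at least two distinct subgroups of order $p$.
   Context: A digraph $\Gamma=(V,\to)$ consists of a finite vertex set $V$ and an anti-symmetric, irreflexive relation $\to$ on $V$. For $s\geq 0$, an $s$-arc is a sequence $v_0,\dots,v_s$ with $v_i\to v_{i+1}$ for $0\leq i<s$. $G$ is said to act transitively on $s$-arcs ($(G,s)$-arc-transitive) if it is transitive on the set of all $s$-arcs. *)

theory Defs
  imports "HOL-Algebra.Algebra"
begin

definition is_digraph :: "'a set \<Rightarrow> ('a \<Rightarrow> 'a \<Rightarrow> bool) \<Rightarrow> bool" where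
  "is_digraph V arc \<longleftrightarrow> finite V \<and> (\<forall>x y. arc x y \<longrightarrow> x \<in> V \<and> y \<in> V)
     \<and> (\<forall>x. \<not> arc x x) \<and> (\<forall>x y. arc x y \<longrightarrow> \<not> arc y x)"

definition s_arcs :: "'a set \<Rightarrow> ('a \<Rightarrow> 'a \<Rightarrow> bool) \<Rightarrow> nat \<Rightarrow> 'a list set" where
  "s_arcs V arc s = {xs. length xs = Suc s \<and> set xs \<subseteq> V
     \<and> (\<forall>i < s. arc (xs ! i) (xs ! Suc i))}"

definition is_aut :: "'a set \<Rightarrow> ('a \<Rightarrow> 'a \<Rightarrow> bool) \<Rightarrow> ('a \<Rightarrow> 'a) \<Rightarrow> bool" where
  "is_aut V arc g \<longleftrightarrow> g \<in> carrier (BijGroup V)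
     \<and> (\<forall>x\<in>V. \<forall>y\<in>V. arc x y \<longleftrightarrow> arc (g x) (g y))"

definition transitive_on :: "('a \<Rightarrow> 'a) set \<Rightarrow> 'a set \<Rightarrow> bool" where
  "transitive_on G V \<longleftrightarrow> (\<forall>x\<in>V. \<forall>y\<in>V. \<exists>g\<in>G. g x = y)"

definition is_block :: "('a \<Rightarrow> 'a) set \<Rightarrow> 'a set \<Rightarrow> 'a set \<Rightarrow> bool" where
  "is_block G V B \<longleftrightarrow> B \<subseteq> V \<and> (\<forall>g\<in>G. g ` B = B \<or> g ` B \<inter> B = {})"

definition primitive_on :: "('a \<Rightarrow> 'a) set \<Rightarrow> 'a set \<Rightarrow> bool" where
  "primitive_on G V \<longleftrightarrow> transitive_on G V
     \<and> (\<forall>B. is_block G V B \<longrightarrow> card B \<le> 1 \<or> B = V)"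

definition s_arc_transitive :: "('a \<Rightarrow> 'a) set \<Rightarrow> 'a set \<Rightarrow> ('a \<Rightarrow> 'a \<Rightarrow> bool) \<Rightarrow> nat \<Rightarrow> bool" where
  "s_arc_transitive G V arc s \<longleftrightarrow>
     (\<forall>xs\<in>s_arcs V arc s. \<forall>ys\<in>s_arcs V arc s. \<exists>g\<in>G. map g xs = ys)"

definition stabiliser :: "('a \<Rightarrow> 'a) set \<Rightarrow> 'a \<Rightarrow> ('a \<Rightarrow> 'a) set" where
  "stabiliser G v = {g\<in>G. g v = v}"

end

theory Submission
  imports Defs "HOL-Algebra.Sylow" "HOL-Algebra.Group_Action"
begin

text \<open>
  Let \<open>v \<rightarrow> w \<rightarrow> x\<close> be a 2-arc. By 2-arc-transitivity \<open>G\<^sub>v\<close> is transitive on the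
  out-neighbours of \<open>v\<close> and \<open>G\<^sub>v\<^sub>w\<close> on those of \<open>w\<close>; both sets have the same size \<open>k\<close>, so
  \<open>|G\<^sub>v| = k |G\<^sub>v\<^sub>w|\<close> and \<open>k\<close> divides \<open>|G\<^sub>v\<^sub>w|\<close>. Hence every prime \<open>p\<close> dividing \<open>|G\<^sub>v|\<close>
  divides \<open>|G\<^sub>v\<^sub>w|\<close>, and by Cauchy there is \<open>P \<le> G\<^sub>v\<^sub>w\<close> of order \<open>p\<close>.
  If \<open>P\<close> were the only subgroup of order \<open>p\<close> in \<open>G\<^sub>v\<close>, it would be normalised by \<open>G\<^sub>v\<close> and
  by every \<open>g\<close> with \<open>g v = w\<close> (as \<open>g\<^sup>-\<^sup>1 P g\<close> fixes \<open>v\<close>). The orbit of \<open>v\<close> under the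
  normaliser \<open>N\<close> of \<open>P\<close> is then a block containing \<open>v\<close> and \<open>w\<close>, so by primitivity \<open>N\<close> is
  transitive; since \<open>P\<close> fixes \<open>v\<close> it fixes every \<open>n v\<close> with \<open>n \<in> N\<close>, so \<open>P = 1\<close>.
\<close>

lemma carrier_BijGroup: "carrier (BijGroup V) = Bij V"
  by (simp add: BijGroup_def)

lemma BijGroup_mult_apply:
  "g \<in> Bij V \<Longrightarrow> h \<in> Bij V \<Longrightarrow> x \<in> V \<Longrightarrow> (g \<otimes>\<^bsub>BijGroup V\<^esub> h) x = g (h x)"
  by (simp add: BijGroup_def compose_def)

lemma BijGroup_one_apply: "x \<in> V \<Longrightarrow> \<one>\<^bsub>BijGroup V\<^esub> x = x"
  by (simp add: BijGroup_def)

lemma Bij_apply_in: "g \<in> Bij V \<Longrightarrow> x \<in> V \<Longrightarrow> g x \<in> V"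
  using Bij_imp_funcset by blast

lemma BijGroup_inv_apply:
  assumes "g \<in> Bij V" "x \<in> V"
  shows "(inv\<^bsub>BijGroup V\<^esub> g) (g x) = x"
  using assms Bij_apply_in[OF assms]
  by (simp add: inv_BijGroup Bij_def bij_betw_def)

lemma BijGroup_conj_apply:
  assumes "h \<in> Bij V" "y \<in> Bij V" "x \<in> V"
  shows "(h \<otimes>\<^bsub>BijGroup V\<^esub> y \<otimes>\<^bsub>BijGroup V\<^esub> inv\<^bsub>BijGroup V\<^esub> h) (h x) = h (y x)"
proof -
  interpret B: group "BijGroup V" by (rule group_BijGroup)
  have "h \<otimes>\<^bsub>BijGroup V\<^esub> y \<in> Bij V" "inv\<^bsub>BijGroup V\<^esub> h \<in> Bij V"
    using assms B.m_closed B.inv_closed by (auto simp: carrier_BijGroup)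
  then show ?thesis
    using assms by (simp add: BijGroup_mult_apply Bij_apply_in BijGroup_inv_apply)
qed

lemma BijGroup_eq_one_if_fixes_all:
  assumes "g \<in> Bij V" "\<forall>x\<in>V. g x = x"
  shows "g = \<one>\<^bsub>BijGroup V\<^esub>"
  using assms Bij_imp_extensional[OF assms(1)]
  by (auto simp: BijGroup_def extensional_def)

lemma finite_Bij: "finite V \<Longrightarrow> finite (Bij V)"
  by (rule finite_subset[of _ "V \<rightarrow>\<^sub>E V"])
     (auto simp: Bij_def bij_betw_def extensional_def finite_PiE)

definition pointwise_stabiliser :: "('a \<Rightarrow> 'a) set \<Rightarrow> 'a set \<Rightarrow> ('a \<Rightarrow> 'a) set" where
  "pointwise_stabiliser H A = {g\<in>H. \<forall>x\<in>A. g x = x}"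

lemma stabiliser_eq_pointwise_stabiliser: "stabiliser G v = pointwise_stabiliser G {v}"
  by (simp add: stabiliser_def pointwise_stabiliser_def)

lemma subgroup_pointwise_stabiliser:
  assumes "subgroup G (BijGroup V)" "A \<subseteq> V"
  shows "subgroup (pointwise_stabiliser G A) (BijGroup V)"
proof -
  interpret B: group "BijGroup V" by (rule group_BijGroup)
  have GB: "g \<in> Bij V" if "g \<in> G" for g
    using that subgroup.subset[OF assms(1)] by (auto simp: carrier_BijGroup)
  show ?thesis
  proof (rule B.subgroupI)
    show "pointwise_stabiliser G A \<subseteq> carrier (BijGroup V)"
      using subgroup.subset[OF assms(1)] by (auto simp: pointwise_stabiliser_def)
    show "pointwise_stabiliser G A \<noteq> {}"
      using subgroup.one_closed[OF assms(1)] assms(2) BijGroup_one_apply[of _ V]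
      by (auto simp: pointwise_stabiliser_def)
  next
    fix g assume "g \<in> pointwise_stabiliser G A"
    then show "inv\<^bsub>BijGroup V\<^esub> g \<in> pointwise_stabiliser G A"
      using assms subgroup.m_inv_closed[OF assms(1)] BijGroup_inv_apply[OF GB]
      by (auto simp: pointwise_stabiliser_def) (metis subsetD)
  next
    fix g h assume "g \<in> pointwise_stabiliser G A" "h \<in> pointwise_stabiliser G A"
    then show "g \<otimes>\<^bsub>BijGroup V\<^esub> h \<in> pointwise_stabiliser G A"
      using assms subgroup.m_closed[OF assms(1)] BijGroup_mult_apply[OF GB GB]
      by (auto simp: pointwise_stabiliser_def)
  qed
qed

lemma pointwise_stabiliser_insert:
  "pointwise_stabiliser G (insert x A) = {g \<in> pointwise_stabiliser G A. g x = x}"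
  by (auto simp: pointwise_stabiliser_def)

lemma card_orbit_mult_card_stabiliser:
  assumes "subgroup K (BijGroup V)" "x \<in> V"
  shows "card {g x |g. g \<in> K} * card {g\<in>K. g x = x} = card K"
proof -
  interpret B: group "BijGroup V" by (rule group_BijGroup)
  interpret K: group_action "(BijGroup V)\<lparr>carrier := K\<rparr>" V id
    unfolding group_action_def group_hom_def group_hom_axioms_def
    using B.subgroup_imp_group[OF assms(1)] B.group_axioms subgroup.subset[OF assms(1)]
    by (auto simp: hom_def)
  show ?thesis
    using K.orbit_stabilizer_theorem[OF assms(2)] by (simp add: orbit_def stabilizer_def order_def)
qed

lemma out_neighbour_exists:
  assumes "is_digraph V arc" "\<exists>x y. arc x y" "\<forall>g\<in>G. is_aut V arc g" "transitive_on G V"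
    "u \<in> V"
  shows "\<exists>z\<in>V. arc u z"
proof -
  obtain a b where ab: "arc a b" using assms(2) by blast
  then have "a \<in> V" "b \<in> V" using assms(1) by (auto simp: is_digraph_def)
  moreover obtain g where "g \<in> G" "g a = u"
    using assms(4,5) \<open>a \<in> V\<close> by (auto simp: transitive_on_def)
  ultimately show ?thesis
    using ab assms(3) Bij_apply_in[of g V b] by (auto simp: is_aut_def carrier_BijGroup)
qed

lemma s_arcs_snoc:
  assumes "xs \<in> s_arcs V arc t" "arc (last xs) z" "z \<in> V"
  shows "xs @ [z] \<in> s_arcs V arc (Suc t)"
proof -
  have len: "length xs = Suc t" using assms(1) by (simp add: s_arcs_def)
  then have "last xs = xs ! t" by (metis diff_Suc_1 last_conv_nth list.size(3) nat.distinct(1))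
  then have "arc ((xs @ [z]) ! i) ((xs @ [z]) ! Suc i)" if "i < Suc t" for i
    using that assms len by (cases "i = t") (auto simp: s_arcs_def nth_append)
  then show ?thesis using assms len by (simp add: s_arcs_def)
qed

lemma s_arcs_extend:
  assumes "\<forall>u\<in>V. \<exists>z\<in>V. arc u z" "xs \<in> s_arcs V arc t"
  shows "\<exists>ys \<in> s_arcs V arc (t + n). take (Suc t) ys = xs"
proof (induction n)
  case 0
  then show ?case using assms(2) by (auto simp: s_arcs_def)
next
  case (Suc n)
  then obtain ys where ys: "ys \<in> s_arcs V arc (t + n)" "take (Suc t) ys = xs" by blast
  have len: "length ys = Suc (t + n)" using ys(1) by (simp add: s_arcs_def)
  then have "last ys \<in> set ys" by (metis last_in_set list.size(3) nat.distinct(1))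
  then have "last ys \<in> V" using ys(1) by (auto simp: s_arcs_def)
  then obtain z where "z \<in> V" "arc (last ys) z" using assms(1) by blast
  then show ?case
    using s_arcs_snoc[OF ys(1)] ys(2) len by (intro bexI[of _ "ys @ [z]"]) auto
qed

lemma s_arc_transitive_le:
  assumes "s_arc_transitive G V arc s" "\<forall>u\<in>V. \<exists>z\<in>V. arc u z" "t \<le> s"
  shows "s_arc_transitive G V arc t"
  unfolding s_arc_transitive_def
proof (intro ballI)
  fix xs ys assume "xs \<in> s_arcs V arc t" "ys \<in> s_arcs V arc t"
  moreover obtain n where "s = t + n" using assms(3) le_Suc_ex by blast
  ultimately obtain xs' ys' where
    "xs' \<in> s_arcs V arc s" "take (Suc t) xs' = xs" "ys' \<in> s_arcs V arc s" "take (Suc t) ys' = ys"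
    using s_arcs_extend[OF assms(2)] by metis
  moreover from this obtain g where "g \<in> G" "map g xs' = ys'"
    using assms(1) unfolding s_arc_transitive_def by blast
  ultimately show "\<exists>g\<in>G. map g xs = ys" by (metis take_map)
qed

lemma aut_image_out_neighbours:
  assumes "is_digraph V arc" "is_aut V arc g" "x \<in> V"
  shows "g ` {u. arc x u} = {u. arc (g x) u}"
proof -
  have out: "{u. arc a u} \<subseteq> V" for a using assms(1) by (auto simp: is_digraph_def)
  have g: "g ` V = V" "\<forall>a\<in>V. \<forall>b\<in>V. arc a b \<longleftrightarrow> arc (g a) (g b)"
    using assms(2) by (auto simp: is_aut_def carrier_BijGroup Bij_def bij_betw_def)
  have "{u. arc (g x) u} \<subseteq> g ` {u. arc x u}"
  proof
    fix y assume y: "y \<in> {u. arc (g x) u}"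
    then obtain u where "u \<in> V" "y = g u" using out g(1) by blast
    then show "y \<in> g ` {u. arc x u}" using y g(2) assms(3) by auto
  qed
  moreover have "g ` {u. arc x u} \<subseteq> {u. arc (g x) u}" using out g(2) assms(3) by auto
  ultimately show ?thesis by blast
qed

lemma card_out_neighbours_eq:
  assumes "is_digraph V arc" "\<forall>g\<in>G. is_aut V arc g" "transitive_on G V" "x \<in> V" "y \<in> V"
  shows "card {u. arc x u} = card {u. arc y u}"
proof -
  obtain g where g: "g \<in> G" "g x = y" using assms(3-5) by (auto simp: transitive_on_def)
  have "inj_on g V"
    using assms(2) g(1) by (auto simp: is_aut_def carrier_BijGroup Bij_def bij_betw_def)
  moreover have "{u. arc x u} \<subseteq> V" using assms(1) by (auto simp: is_digraph_def)
  ultimately have "card (g ` {u. arc x u}) = card {u. arc x u}"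
    by (meson card_image inj_on_subset)
  then show ?thesis using aut_image_out_neighbours[OF assms(1) _ assms(4)] assms(2) g by simp
qed

lemma orbit_pointwise_stabiliser_s_arc:
  assumes "is_digraph V arc" "\<forall>g\<in>G. is_aut V arc g" "s_arc_transitive G V arc (Suc t)"
    "xs \<in> s_arcs V arc t" "arc (last xs) w"
  shows "{g w |g. g \<in> pointwise_stabiliser G (set xs)} = {u. arc (last xs) u}"
proof
  have arcV: "\<And>a b. arc a b \<Longrightarrow> a \<in> V \<and> b \<in> V" using assms(1) by (auto simp: is_digraph_def)
  have "last xs \<in> set xs" using assms(4) by (intro last_in_set) (auto simp: s_arcs_def)
  show "{g w |g. g \<in> pointwise_stabiliser G (set xs)} \<subseteq> {u. arc (last xs) u}"
  proof clarify
    fix g assume g: "g \<in> pointwise_stabiliser G (set xs)"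
    then have "g (last xs) = last xs" "is_aut V arc g"
      using \<open>last xs \<in> set xs\<close> assms(2) by (auto simp: pointwise_stabiliser_def)
    then show "arc (last xs) (g w)" using assms(5) arcV[OF assms(5)] by (metis is_aut_def)
  qed
  show "{u. arc (last xs) u} \<subseteq> {g w |g. g \<in> pointwise_stabiliser G (set xs)}"
  proof
    fix u assume "u \<in> {u. arc (last xs) u}"
    then have "xs @ [u] \<in> s_arcs V arc (Suc t)" "xs @ [w] \<in> s_arcs V arc (Suc t)"
      using s_arcs_snoc[OF assms(4)] assms(5) arcV by auto
    then obtain g where "g \<in> G" "map g (xs @ [w]) = xs @ [u]"
      using assms(3) unfolding s_arc_transitive_def by blast
    then have g: "g \<in> G" "map g xs = xs" "g w = u" by auto
    then have "g \<in> pointwise_stabiliser G (set xs)"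
      using map_eq_conv[of g xs "\<lambda>x. x"] by (simp add: pointwise_stabiliser_def)
    then show "u \<in> {g w |g. g \<in> pointwise_stabiliser G (set xs)}" using g(3) by blast
  qed
qed

lemma card_pointwise_stabiliser_snoc:
  assumes "is_digraph V arc" "subgroup G (BijGroup V)" "\<forall>g\<in>G. is_aut V arc g"
    "s_arc_transitive G V arc (Suc t)" "xs \<in> s_arcs V arc t" "arc (last xs) w"
  shows "card {u. arc (last xs) u} * card (pointwise_stabiliser G (set (xs @ [w])))
    = card (pointwise_stabiliser G (set xs))"
proof -
  have "set xs \<subseteq> V" "w \<in> V" using assms(1,5,6) by (auto simp: s_arcs_def is_digraph_def)
  then show ?thesis
    using card_orbit_mult_card_stabiliser[OF subgroup_pointwise_stabiliser[OF assms(2)], of "set xs" w]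
      orbit_pointwise_stabiliser_s_arc[OF assms(1,3-6)]
    by (simp add: pointwise_stabiliser_insert)
qed

lemma prime_dvd_card_arc_stabiliser:
  assumes "is_digraph V arc" "subgroup G (BijGroup V)" "\<forall>g\<in>G. is_aut V arc g"
    "transitive_on G V" "s_arc_transitive G V arc 2" "arc v w"
    "Factorial_Ring.prime (p :: nat)" "p dvd card (stabiliser G v)"
  shows "p dvd card (pointwise_stabiliser G {v, w})"
proof -
  have vw: "v \<in> V" "w \<in> V" using assms(1,6) by (auto simp: is_digraph_def)
  have out: "\<forall>u\<in>V. \<exists>z\<in>V. arc u z"
    using out_neighbour_exists[OF assms(1) _ assms(3,4)] assms(6) by blast
  then obtain x where x: "arc w x" using vw by blast
  have arcs: "[v] \<in> s_arcs V arc 0" "[v, w] \<in> s_arcs V arc 1"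
    using vw assms(6) by (auto simp: s_arcs_def)
  have "s_arc_transitive G V arc (Suc 0)" "s_arc_transitive G V arc (Suc 1)"
    using s_arc_transitive_le[OF assms(5) out] by auto
  then have Gv_eq: "card {u. arc v u} * card (pointwise_stabiliser G {v, w}) = card (stabiliser G v)"
    and Gvw_eq: "card {u. arc w u} * card (pointwise_stabiliser G {v, w, x})
      = card (pointwise_stabiliser G {v, w})"
    using card_pointwise_stabiliser_snoc[OF assms(1-3) _ arcs(1), of w]
      card_pointwise_stabiliser_snoc[OF assms(1-3) _ arcs(2), of x] assms(6) x
    by (auto simp: stabiliser_eq_pointwise_stabiliser insert_commute)
  moreover have "card {u. arc w u} = card {u. arc v u}"
    using card_out_neighbours_eq[OF assms(1,3,4)] vw by blast
  ultimately have "card {u. arc v u} dvd card (pointwise_stabiliser G {v, w})"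
    by (metis dvd_triv_left)
  moreover have "p dvd card {u. arc v u} \<or> p dvd card (pointwise_stabiliser G {v, w})"
    using Gv_eq assms(7,8) prime_dvd_mult_iff by metis
  ultimately show ?thesis by (meson dvd_trans)
qed

lemma (in group) exists_subgroup_of_prime_order:
  assumes "subgroup K G" "finite K" "Factorial_Ring.prime p" "p dvd card K"
  shows "\<exists>P. subgroup P G \<and> P \<subseteq> K \<and> card P = p"
proof -
  obtain m where "card K = p * m" using assms(4) by auto
  then obtain P where "subgroup P (G\<lparr>carrier := K\<rparr>)" "card P = p"
    using sylow_thm[OF assms(3) subgroup_imp_group[OF assms(1)], of 1 m] assms(2)
    by (auto simp: order_def)
  then show ?thesis using incl_subgroup[OF assms(1)] subgroup.subset by fastforce
qed

lemma (in group) conjugate_eq_image: "g <# H #> inv g = (\<lambda>h. g \<otimes> h \<otimes> inv g) ` H"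
  by (auto simp: l_coset_def r_coset_def)

lemma (in group) subgroup_conjugate:
  assumes "g \<in> carrier G" "subgroup H G"
  shows "subgroup (g <# H #> inv g) G"
  using subgroup_conjugation_is_surj1[OF inv_closed[OF assms(1)] assms(2)] assms(1) by simp

lemma (in group) card_conjugate:
  assumes "g \<in> carrier G" "H \<subseteq> carrier G"
  shows "card (g <# H #> inv g) = card H"
  unfolding conjugate_eq_image using assms
  by (intro card_image inj_onI) (meson conjugation_is_inj subsetD)

lemma (in group) mem_normalizer_iff:
  assumes "H \<subseteq> carrier G"
  shows "g \<in> normalizer G H \<longleftrightarrow> g \<in> carrier G \<and> g <# H #> inv g = H"
  using assms by (simp add: normalizer_def stabilizer_def)

lemma (in group) mem_normalizer_if_unique_subgroup_of_its_order:
  assumes "subgroup P G" "g \<in> carrier G" "g <# P #> inv g \<subseteq> S"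
    "\<And>Q. subgroup Q G \<Longrightarrow> Q \<subseteq> S \<Longrightarrow> card Q = card P \<Longrightarrow> Q = P"
  shows "g \<in> normalizer G P"
  using assms subgroup_conjugate card_conjugate mem_normalizer_iff subgroup.subset by metis

lemma conjugate_fixes_image_point:
  assumes "h \<in> Bij V" "P \<subseteq> Bij V" "x \<in> V" "\<forall>y\<in>P. y x = x"
    "z \<in> h <#\<^bsub>BijGroup V\<^esub> P #>\<^bsub>BijGroup V\<^esub> inv\<^bsub>BijGroup V\<^esub> h"
  shows "z (h x) = h x"
proof -
  interpret B: group "BijGroup V" by (rule group_BijGroup)
  obtain y where "y \<in> P" "z = h \<otimes>\<^bsub>BijGroup V\<^esub> y \<otimes>\<^bsub>BijGroup V\<^esub> inv\<^bsub>BijGroup V\<^esub> h"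
    using assms(5) B.conjugate_eq_image by auto
  moreover have "y \<in> Bij V" using \<open>y \<in> P\<close> assms(2) by blast
  ultimately show ?thesis using BijGroup_conj_apply[OF assms(1) _ assms(3)] assms(4) by auto
qed

lemma is_block_orbit_of_overgroup_of_stabiliser:
  assumes "subgroup G (BijGroup V)" "subgroup N (BijGroup V)" "N \<subseteq> G" "v \<in> V"
    "stabiliser G v \<subseteq> N"
  shows "is_block G V ((\<lambda>n. n v) ` N)"
proof -
  interpret B: group "BijGroup V" by (rule group_BijGroup)
  have GB: "G \<subseteq> Bij V" using subgroup.subset[OF assms(1)] by (simp add: carrier_BijGroup)
  have orbit_image: "h ` ((\<lambda>n. n v) ` N) = (\<lambda>n. n v) ` (h <#\<^bsub>BijGroup V\<^esub> N)"
    if "h \<in> G" for h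
  proof -
    have "(\<lambda>n. n v) ` (h <#\<^bsub>BijGroup V\<^esub> N) = (\<lambda>n. (h \<otimes>\<^bsub>BijGroup V\<^esub> n) v) ` N"
      by (auto simp: l_coset_def)
    also have "\<dots> = (\<lambda>n. h (n v)) ` N"
      using that GB assms(3,4) by (intro image_cong) (auto intro: BijGroup_mult_apply)
    finally show ?thesis by (simp add: image_image)
  qed
  have mem_N: "h \<in> N" if h: "h \<in> G" "h (n1 v) = n2 v" "n1 \<in> N" "n2 \<in> N" for h n1 n2
  proof -
    have G: "n1 \<in> G" "n2 \<in> G" using h(3,4) assms(3) by auto
    then have B: "n1 \<in> Bij V" "n2 \<in> Bij V" "h \<in> Bij V" "inv\<^bsub>BijGroup V\<^esub> n2 \<in> Bij V"
      using h(1) GB B.inv_closed by (auto simp: carrier_BijGroup)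
    then have n2h: "inv\<^bsub>BijGroup V\<^esub> n2 \<otimes>\<^bsub>BijGroup V\<^esub> h \<in> Bij V"
      using B.m_closed by (simp add: carrier_BijGroup)
    define k where "k = inv\<^bsub>BijGroup V\<^esub> n2 \<otimes>\<^bsub>BijGroup V\<^esub> h \<otimes>\<^bsub>BijGroup V\<^esub> n1"
    have "k v = (inv\<^bsub>BijGroup V\<^esub> n2) (h (n1 v))"
      using B n2h assms(4) by (simp add: k_def BijGroup_mult_apply Bij_apply_in)
    also have "\<dots> = v" using h(2) BijGroup_inv_apply[OF B(2) assms(4)] by simp
    finally have "k v = v" .
    moreover have "k \<in> G"
      unfolding k_def using G h(1) subgroup.m_closed[OF assms(1)] subgroup.m_inv_closed[OF assms(1)]
      by simp
    ultimately have "k \<in> N" using assms(5) unfolding stabiliser_def by blast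
    moreover have "h = n2 \<otimes>\<^bsub>BijGroup V\<^esub> k \<otimes>\<^bsub>BijGroup V\<^esub> inv\<^bsub>BijGroup V\<^esub> n1"
      using B unfolding k_def carrier_BijGroup[symmetric]
      by (simp add: B.m_assoc flip: B.m_assoc[of n2 "inv\<^bsub>BijGroup V\<^esub> n2"])
    ultimately show ?thesis
      using h(3,4) subgroup.m_closed[OF assms(2)] subgroup.m_inv_closed[OF assms(2)] by simp
  qed
  have "h ` ((\<lambda>n. n v) ` N) = (\<lambda>n. n v) ` N"
    if h: "h \<in> G" "h ` ((\<lambda>n. n v) ` N) \<inter> (\<lambda>n. n v) ` N \<noteq> {}" for h
  proof -
    obtain n1 n2 where "n1 \<in> N" "n2 \<in> N" "h (n1 v) = n2 v" using h(2) by blast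
    then have "h \<in> N" using mem_N h(1) by blast
    then have "h <#\<^bsub>BijGroup V\<^esub> N = N"
      using B.coset_join3[OF _ assms(2)] subgroup.subset[OF assms(2)] by blast
    then show ?thesis using orbit_image[OF h(1)] by simp
  qed
  moreover have "(\<lambda>n. n v) ` N \<subseteq> V" using assms(3,4) GB by (auto intro: Bij_apply_in)
  ultimately show ?thesis unfolding is_block_def by blast
qed

lemma primitive_unique_subgroup_of_stabiliser_fixing_two_points_trivial:
  assumes "finite V" "subgroup G (BijGroup V)" "primitive_on G V" "v \<in> V" "w \<in> V" "v \<noteq> w"
    "subgroup P (BijGroup V)" "P \<subseteq> pointwise_stabiliser G {v, w}"
    "\<And>Q. subgroup Q (BijGroup V) \<Longrightarrow> Q \<subseteq> stabiliser G v \<Longrightarrow> card Q = card P \<Longrightarrow> Q = P"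
  shows "P = {\<one>\<^bsub>BijGroup V\<^esub>}"
proof -
  interpret B: group "BijGroup V" by (rule group_BijGroup)
  have GB: "G \<subseteq> Bij V" and PB: "P \<subseteq> Bij V"
    using subgroup.subset[OF assms(2)] subgroup.subset[OF assms(7)] by (auto simp: carrier_BijGroup)
  have P_fixes: "\<forall>y\<in>P. y v = v" "\<forall>y\<in>P. y w = w"
    using assms(8) by (auto simp: pointwise_stabiliser_def)
  have conj_in_G: "h <#\<^bsub>BijGroup V\<^esub> P #>\<^bsub>BijGroup V\<^esub> inv\<^bsub>BijGroup V\<^esub> h \<subseteq> G" if "h \<in> G" for h
    using that assms(8) subgroup.m_closed[OF assms(2)] subgroup.m_inv_closed[OF assms(2)]
    unfolding B.conjugate_eq_image pointwise_stabiliser_def by blast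
  define N where "N = G \<inter> normalizer (BijGroup V) P"
  have N: "subgroup N (BijGroup V)" "N \<subseteq> G"
    unfolding N_def using B.subgroups_Inter_pair[OF assms(2) B.normalizer_imp_subgroup]
      subgroup.subset[OF assms(7)] by auto
  have mem_N: "h \<in> N"
    if "h \<in> G" "\<forall>z \<in> h <#\<^bsub>BijGroup V\<^esub> P #>\<^bsub>BijGroup V\<^esub> inv\<^bsub>BijGroup V\<^esub> h. z v = v" for h
  proof -
    have "h \<in> carrier (BijGroup V)" using that(1) subgroup.subset[OF assms(2)] by blast
    moreover have "h <#\<^bsub>BijGroup V\<^esub> P #>\<^bsub>BijGroup V\<^esub> inv\<^bsub>BijGroup V\<^esub> h \<subseteq> stabiliser G v"
      using conj_in_G[OF that(1)] that(2) by (auto simp: stabiliser_def)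
    ultimately have "h \<in> normalizer (BijGroup V) P"
      by (rule B.mem_normalizer_if_unique_subgroup_of_its_order[OF assms(7) _ _ assms(9)])
    then show ?thesis using that(1) by (simp add: N_def)
  qed
  have "stabiliser G v \<subseteq> N"
  proof
    fix h assume "h \<in> stabiliser G v"
    then have "h \<in> G" "h v = v" by (auto simp: stabiliser_def)
    then show "h \<in> N"
      using mem_N conjugate_fixes_image_point[OF _ PB assms(4) P_fixes(1), of h] GB by auto
  qed
  obtain g where g: "g \<in> G" "g v = w"
    using assms(3-5) unfolding primitive_on_def transitive_on_def by blast
  have "inv\<^bsub>BijGroup V\<^esub> g \<in> G" "(inv\<^bsub>BijGroup V\<^esub> g) w = v"
    using g subgroup.m_inv_closed[OF assms(2)] GB BijGroup_inv_apply[of g V v] assms(4) by auto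
  then have "inv\<^bsub>BijGroup V\<^esub> g \<in> N"
    using mem_N conjugate_fixes_image_point[OF _ PB assms(5) P_fixes(2)] GB by (metis subsetD)
  then have "g \<in> N"
    using subgroup.m_inv_closed[OF N(1)] B.inv_inv g(1) GB by (metis carrier_BijGroup subsetD)
  have orbit_N: "(\<lambda>n. n v) ` N = V"
  proof -
    have "is_block G V ((\<lambda>n. n v) ` N)"
      using is_block_orbit_of_overgroup_of_stabiliser[OF assms(2) N(1,2) assms(4)]
        \<open>stabiliser G v \<subseteq> N\<close> .
    moreover have "v \<in> (\<lambda>n. n v) ` N" "w \<in> (\<lambda>n. n v) ` N"
      using subgroup.one_closed[OF N(1)] BijGroup_one_apply[OF assms(4)] \<open>g \<in> N\<close> g(2)
      by (metis image_eqI)+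
    moreover have "finite ((\<lambda>n. n v) ` N)"
      using assms(1) calculation(1) unfolding is_block_def by (metis finite_subset)
    ultimately have "\<not> card ((\<lambda>n. n v) ` N) \<le> 1"
      using assms(6) card_le_Suc0_iff_eq by (metis One_nat_def)
    then show ?thesis
      using assms(3) \<open>is_block G V ((\<lambda>n. n v) ` N)\<close> unfolding primitive_on_def by blast
  qed
  have "\<forall>x\<in>V. y x = x" if "y \<in> P" for y
  proof
    fix x assume "x \<in> V"
    then obtain n where n: "n \<in> N" "x = n v" using orbit_N by blast
    then have "n <#\<^bsub>BijGroup V\<^esub> P #>\<^bsub>BijGroup V\<^esub> inv\<^bsub>BijGroup V\<^esub> n = P"
      using B.mem_normalizer_iff subgroup.subset[OF assms(7)] by (auto simp: N_def)
    then show "y x = x"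
      using conjugate_fixes_image_point[OF _ PB assms(4) P_fixes(1)] n N(2) GB that by blast
  qed
  then show ?thesis
    using BijGroup_eq_one_if_fixes_all PB subgroup.one_closed[OF assms(7)] by blast
qed

theorem corollary2p8:
  fixes V :: "'a set" and arc :: "'a \<Rightarrow> 'a \<Rightarrow> bool" and G :: "('a \<Rightarrow> 'a) set"
    and s :: nat and v :: 'a and p :: nat
  assumes "is_digraph V arc"
    and "\<exists>x y. arc x y"
    and "subgroup G (BijGroup V)"
    and "\<forall>g\<in>G. is_aut V arc g"
    and "primitive_on G V"
    and "s \<ge> 2"
    and "s_arc_transitive G V arc s"
    and "v \<in> V"
    and "Factorial_Ring.prime p"
    and "p dvd card (stabiliser G v)"
  shows "\<exists>H1 H2. H1 \<noteq> H2
    \<and> subgroup H1 ((BijGroup V)\<lparr>carrier := stabiliser G v\<rparr>) \<and> card H1 = p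
    \<and> subgroup H2 ((BijGroup V)\<lparr>carrier := stabiliser G v\<rparr>) \<and> card H2 = p"
proof (rule ccontr)
  assume no_two: "\<not> ?thesis"
  interpret B: group "BijGroup V" by (rule group_BijGroup)
  have "finite V" "transitive_on G V" using assms(1,5) by (auto simp: is_digraph_def primitive_on_def)
  have out: "\<forall>u\<in>V. \<exists>z\<in>V. arc u z"
    using out_neighbour_exists[OF assms(1,2,4) \<open>transitive_on G V\<close>] by blast
  then obtain w where "arc v w" "w \<in> V" using assms(8) by blast
  then have "v \<noteq> w" using assms(1) by (auto simp: is_digraph_def)
  have Gvw: "subgroup (pointwise_stabiliser G {v, w}) (BijGroup V)"
    using subgroup_pointwise_stabiliser[OF assms(3)] assms(8) \<open>w \<in> V\<close> by simp
  moreover have "finite (pointwise_stabiliser G {v, w})"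
    using finite_Bij[OF \<open>finite V\<close>] subgroup.subset[OF Gvw]
    by (auto simp: carrier_BijGroup intro: finite_subset)
  moreover have "p dvd card (pointwise_stabiliser G {v, w})"
    using prime_dvd_card_arc_stabiliser[OF assms(1,3,4) \<open>transitive_on G V\<close> _ \<open>arc v w\<close> assms(9,10)]
      s_arc_transitive_le[OF assms(7) out assms(6)] by blast
  ultimately obtain P where P: "subgroup P (BijGroup V)" "P \<subseteq> pointwise_stabiliser G {v, w}"
    "card P = p"
    using B.exists_subgroup_of_prime_order assms(9) by blast
  have Gv: "subgroup (stabiliser G v) (BijGroup V)"
    using subgroup_pointwise_stabiliser[OF assms(3)] assms(8)
    by (simp add: stabiliser_eq_pointwise_stabiliser)
  have "P \<subseteq> stabiliser G v" using P(2) by (auto simp: pointwise_stabiliser_def stabiliser_def)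
  then have "Q = P" if "subgroup Q (BijGroup V)" "Q \<subseteq> stabiliser G v" "card Q = card P" for Q
    using no_two that P B.subgroup_incl[OF _ Gv] by metis
  then have "P = {\<one>\<^bsub>BijGroup V\<^esub>}"
    using primitive_unique_subgroup_of_stabiliser_fixing_two_points_trivial[OF \<open>finite V\<close> assms(3,5,8)
        \<open>w \<in> V\<close> \<open>v \<noteq> w\<close> P(1,2)] by blast
  then show False using P(3) prime_gt_1_nat[OF assms(9)] by simp
qed

end
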